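(* Let $G$ be a claw-free graph and $C_0$ an even hole of $G$. If a vertex $\mathbf{t}$ lies in $\Gamma[C_0]$, then $\mathbf{t}\in\Gamma[C]$ for every even hole $C\in\langle C_0\rangle$.
   Context: A hole is an induced cycle of length $\ge4$; even hole: even length. Claw-free: no induced $K_{1,3}$. For a vertex set $U$, $\Gamma[U]=\bigcup_{\mathbf{j}\in U}(\Gamma(\mathbf{j})\cup\{\mathbf{j}\})$ is its closed neighbourhood. Single-vertex deformation: if $C$ is an even hole and $\mathbf{j}\notin C$ has $\Gamma_C(\mathbf{j})=\{\mathbf{u},\mathbf{k},\mathbf{v}\}$ with $\mathbf{u},\mathbf{v}$ the two neighbours of $\mathbf{k}$ in $C$, then $(C\setminus\{\mathbf{k}\})\cup\{\mathbf{j}\}$ is a single-vertex deformation of $C$. The deformation closure $\langle C_0\rangle$ is the smallest set of holes containing $C_0$ and closed under single-vertex deformations. *)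

theory Defs
  imports Main
begin

definition graph :: "'a set \<Rightarrow> ('a \<Rightarrow> 'a \<Rightarrow> bool) \<Rightarrow> bool" where
  "graph V E \<longleftrightarrow> (\<forall>x y. E x y \<longrightarrow> x \<in> V \<and> y \<in> V \<and> E y x \<and> x \<noteq> y)"

definition claw_free :: "'a set \<Rightarrow> ('a \<Rightarrow> 'a \<Rightarrow> bool) \<Rightarrow> bool" where
  "claw_free V E \<longleftrightarrow> \<not> (\<exists>a\<in>V. \<exists>b\<in>V. \<exists>c\<in>V. \<exists>d\<in>V.
      E a b \<and> E a c \<and> E a d \<and> b \<noteq> c \<and> b \<noteq> d \<and> c \<noteq> d \<and>
      \<not> E b c \<and> \<not> E b d \<and> \<not> E c d)"

definition hole :: "'a set \<Rightarrow> ('a \<Rightarrow> 'a \<Rightarrow> bool) \<Rightarrow> 'a set \<Rightarrow> bool" where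
  "hole V E C \<longleftrightarrow> C \<subseteq> V \<and> (\<exists>vs. distinct vs \<and> set vs = C \<and> length vs \<ge> 4 \<and>
      (\<forall>i<length vs. \<forall>j<length vs.
         E (vs ! i) (vs ! j) \<longleftrightarrow>
           (j = Suc i mod length vs \<or> i = Suc j mod length vs)))"

definition even_hole :: "'a set \<Rightarrow> ('a \<Rightarrow> 'a \<Rightarrow> bool) \<Rightarrow> 'a set \<Rightarrow> bool" where
  "even_hole V E C \<longleftrightarrow> hole V E C \<and> even (card C)"

definition nbrs_in :: "('a \<Rightarrow> 'a \<Rightarrow> bool) \<Rightarrow> 'a set \<Rightarrow> 'a \<Rightarrow> 'a set" where
  "nbrs_in E C j = {v \<in> C. E j v}"

definition closed_nbhd :: "('a \<Rightarrow> 'a \<Rightarrow> bool) \<Rightarrow> 'a set \<Rightarrow> 'a set" where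
  "closed_nbhd E U = (\<Union>j\<in>U. {v. E j v} \<union> {j})"

definition sv_deformation :: "'a set \<Rightarrow> ('a \<Rightarrow> 'a \<Rightarrow> bool) \<Rightarrow> 'a set \<Rightarrow> 'a set \<Rightarrow> bool" where
  "sv_deformation V E C C' \<longleftrightarrow> even_hole V E C \<and>
     (\<exists>j u k v. j \<in> V \<and> j \<notin> C \<and> k \<in> C \<and> u \<noteq> v \<and>
        nbrs_in E C k = {u, v} \<and> nbrs_in E C j = {u, k, v} \<and>
        C' = (C - {k}) \<union> {j})"

inductive_set deform_closure :: "'a set \<Rightarrow> ('a \<Rightarrow> 'a \<Rightarrow> bool) \<Rightarrow> 'a set \<Rightarrow> 'a set set"
  for V E C0 where
  base: "C0 \<in> deform_closure V E C0"
| step: "C \<in> deform_closure V E C0 \<Longrightarrow> sv_deformation V E C C' \<Longrightarrow> C' \<in> deform_closure V E C0"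

end

theory Submission
  imports Defs
begin

text \<open>A deformation replaces a vertex k of C by a vertex j adjacent to k and to both
  C-neighbours u, v of k. Only the neighbours t of k outside C need attention: as u and v
  are non-adjacent (a hole has no triangles), claw-freeness at k forces t to be adjacent to
  u or v, which both survive the deformation. So closed neighbourhoods only grow along
  deformations.\<close>

lemma mem_closed_nbhd_iff: "t \<in> closed_nbhd E U \<longleftrightarrow> t \<in> U \<or> (\<exists>c\<in>U. E c t)"
  unfolding closed_nbhd_def by blast

lemma hole_triangle_free:
  assumes "hole V E C" "x \<in> C" "y \<in> C" "z \<in> C"
  shows "\<not> (E x y \<and> E y z \<and> E x z)"
proof
  assume adjacent: "E x y \<and> E y z \<and> E x z"
  obtain vs where "set vs = C" and n4: "length vs \<ge> 4"
    and adj: "\<forall>i<length vs. \<forall>j<length vs. E (vs ! i) (vs ! j) \<longleftrightarrow>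
           (j = Suc i mod length vs \<or> i = Suc j mod length vs)"
    using assms(1) unfolding hole_def by blast
  define n where "n = length vs"
  obtain a b c where abc: "a < n" "b < n" "c < n" "x = vs ! a" "y = vs ! b" "z = vs ! c"
    using assms(2-4) \<open>set vs = C\<close> unfolding n_def by (metis in_set_conv_nth)
  have succ: "\<And>i. i < n \<Longrightarrow> Suc i mod n = (if Suc i = n then 0 else Suc i)"
    by auto
  have "b = Suc a mod n \<or> a = Suc b mod n" "c = Suc b mod n \<or> b = Suc c mod n"
    "c = Suc a mod n \<or> a = Suc c mod n"
    using adj abc adjacent unfolding n_def by blast+
  then show False
    using abc(1-3) n4 unfolding succ[OF abc(1)] succ[OF abc(2)] succ[OF abc(3)] n_def[symmetric]
    by (auto split: if_splits)
qed

lemma claw_free_adj_to_nonadjacent_nbr: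
  assumes "graph V E" "claw_free V E"
    and "E k u" "E k v" "E k t" "u \<noteq> v" "\<not> E u v" "t \<noteq> u" "t \<noteq> v"
  shows "E u t \<or> E v t"
  using assms unfolding graph_def claw_free_def by blast

lemma closed_nbhd_mono_sv_deformation:
  assumes g: "graph V E" and cf: "claw_free V E" and deform: "sv_deformation V E C C'"
  shows "closed_nbhd E C \<subseteq> closed_nbhd E C'"
proof
  fix t
  assume t: "t \<in> closed_nbhd E C"
  obtain j u k v where "even_hole V E C" and k: "k \<in> C" "u \<noteq> v"
    and nk: "nbrs_in E C k = {u, v}" and nj: "nbrs_in E C j = {u, k, v}"
    and C': "C' = (C - {k}) \<union> {j}"
    using deform unfolding sv_deformation_def by blast
  then have "hole V E C" unfolding even_hole_def by simp
  have u: "u \<in> C" "E k u" and v: "v \<in> C" "E k v" and "E j k"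
    using nk nj unfolding nbrs_in_def by blast+
  have "u \<in> C'" "v \<in> C'"
    using C' u v g unfolding graph_def by blast+
  have "\<not> E u v"
    using hole_triangle_free[OF \<open>hole V E C\<close> k(1) u(1) v(1)] u v by blast
  show "t \<in> closed_nbhd E C'"
  proof (cases "t \<in> C' \<or> t = k")
    case True
    then show ?thesis
      using \<open>E j k\<close> C' unfolding mem_closed_nbhd_iff by blast
  next
    case False
    then have "t \<notin> C" using C' by blast
    then obtain c where "c \<in> C" "E c t"
      using t unfolding mem_closed_nbhd_iff by blast
    show ?thesis
    proof (cases "c = k")
      case True
      have "t \<noteq> u" "t \<noteq> v" using \<open>t \<notin> C\<close> u v by blast+
      then have "E u t \<or> E v t"
        using claw_free_adj_to_nonadjacent_nbr[OF g cf u(2) v(2)] \<open>E c t\<close> True k(2) \<open>\<not> E u v\<close>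
        by blast
      then show ?thesis
        using \<open>u \<in> C'\<close> \<open>v \<in> C'\<close> unfolding mem_closed_nbhd_iff by blast
    next
      case False
      then show ?thesis
        using \<open>c \<in> C\<close> \<open>E c t\<close> C' unfolding mem_closed_nbhd_iff by blast
    qed
  qed
qed

theorem lemma4:
  assumes "graph V E" and "claw_free V E" and "even_hole V E C0"
    and "t \<in> closed_nbhd E C0"
    and "C \<in> deform_closure V E C0" and "even_hole V E C"
  shows "t \<in> closed_nbhd E C"
  using assms(5)
proof (induction rule: deform_closure.induct)
  case base
  show ?case using assms(4) .
next
  case (step C C')
  then show ?case
    using closed_nbhd_mono_sv_deformation[OF assms(1,2)] by blast
qed

end
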